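(* Let $\psi\in\Gamma_0(\mathbb{R}^n)$ be Legendre, strongly self-concordant on $\operatorname{int}\operatorname{dom}\psi$ with constant $M_\psi>0$, and with $\nabla^2\psi(x)\succ0$ for all $x\in\operatorname{int}\operatorname{dom}\psi$. Let $s\in\operatorname{int}\operatorname{dom}\psi$ and $e\in\mathbb{R}^n$ with $\nabla\psi(s)-e\in\operatorname{int}\operatorname{dom}\psi^*$ and $\sqrt{\langle e,\nabla^2\psi(s)^{-1}e\rangle}<\frac{1}{3M_\psi}$. Then, for $x^+(s):=\nabla\psi^*(\nabla\psi(s)-e)$, $$D_\psi(x^+(s),s)\le2\langle e,\nabla^2\psi(s)^{-1}e\rangle.$$
   Context: $\Gamma_0(\mathbb{R}^n)$: proper lsc convex functions. $\psi$ is Legendre if essentially smooth ($\operatorname{int}\operatorname{dom}\psi\ne\emptyset$, differentiable there, $\|\nabla\psi(z^\nu)\|\to\infty$ whenever $\operatorname{int}\operatorname{dom}\psi\ni z^\nu\to z\in\operatorname{bdry}\operatorname{dom}\psi$) and essentially strictly convex (strictly convex on every convex subset of $\operatorname{dom}\partial\psi$); then $\nabla\psi^*$ is the inverse of $\nabla\psi:\operatorname{int}\operatorname{dom}\psi\to\operatorname{int}\operatorname{dom}\psi^*$. $D_\psi(a,c)=\psi(a)-\psi(c)-\langle\nabla\psi(c),a-c\rangle$ for $a\in\operatorname{dom}\psi$, $c\in\operatorname{int}\operatorname{dom}\psi$. Self-concordance (Nesterov–Nemirovski convention): $h$ is self-concordant with constant $M>0$ on an open set $Q$ if $h\in\mathcal{C}^3(Q)$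 and $|D^3h(x)[u,u,u]|\le2M\langle u,\nabla^2h(x)u\rangle^{3/2}$ for all $x\in Q$, $u\in\mathbb{R}^n$; it is strongly self-concordant on $Q$ if moreover all level sets $\{x\in Q:h(x)\le\alpha\}$ are closed in $\mathbb{R}^n$. *)

theory Defs
  imports "HOL-Analysis.Analysis"
begin

definition edom :: "('a::euclidean_space \<Rightarrow> ereal) \<Rightarrow> 'a set" where
  "edom f = {x. f x < \<infinity>}"

definition proper_fun :: "('a::euclidean_space \<Rightarrow> ereal) \<Rightarrow> bool" where
  "proper_fun f \<longleftrightarrow> (\<forall>x. f x \<noteq> -\<infinity>) \<and> (\<exists>x. f x \<noteq> \<infinity>)"

definition lsc_fun :: "('a::euclidean_space \<Rightarrow> ereal) \<Rightarrow> bool" where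
  "lsc_fun f \<longleftrightarrow> (\<forall>x. f x \<le> Liminf (at x) f)"

definition convex_efun :: "('a::euclidean_space \<Rightarrow> ereal) \<Rightarrow> bool" where
  "convex_efun f \<longleftrightarrow> convex {(x, t::real). f x \<le> ereal t}"

definition Gamma0 :: "('a::euclidean_space \<Rightarrow> ereal) \<Rightarrow> bool" where
  "Gamma0 f \<longleftrightarrow> proper_fun f \<and> lsc_fun f \<and> convex_efun f"

definition fconj :: "('a::euclidean_space \<Rightarrow> ereal) \<Rightarrow> 'a \<Rightarrow> ereal" where
  "fconj f y = (SUP x. ereal (inner y x) - f x)"

text \<open>Gradient (of the real-valued restriction, meaningful at interior points of the domain).\<close>
definition egrad :: "('a::euclidean_space \<Rightarrow> ereal) \<Rightarrow> 'a \<Rightarrow> 'a" where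
  "egrad f x = (SOME g. GDERIV (\<lambda>y. real_of_ereal (f y)) x :> g)"

definition edifferentiable :: "('a::euclidean_space \<Rightarrow> ereal) \<Rightarrow> 'a \<Rightarrow> bool" where
  "edifferentiable f x \<longleftrightarrow> (\<exists>g. GDERIV (\<lambda>y. real_of_ereal (f y)) x :> g)"

definition ehess :: "('a::euclidean_space \<Rightarrow> ereal) \<Rightarrow> 'a \<Rightarrow> ('a \<Rightarrow> 'a)" where
  "ehess f x = (SOME H. (egrad f has_derivative H) (at x))"

definition subdiff :: "('a::euclidean_space \<Rightarrow> ereal) \<Rightarrow> 'a \<Rightarrow> 'a set" where
  "subdiff f x = {g. f x < \<infinity> \<and> (\<forall>y. f x + ereal (inner g (y - x)) \<le> f y)}"

definition dom_subdiff :: "('a::euclidean_space \<Rightarrow> ereal) \<Rightarrow> 'a set" where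
  "dom_subdiff f = {x. subdiff f x \<noteq> {}}"

definition strictly_convex_on_efun :: "'a::euclidean_space set \<Rightarrow> ('a \<Rightarrow> ereal) \<Rightarrow> bool" where
  "strictly_convex_on_efun C f \<longleftrightarrow>
     (\<forall>x\<in>C. \<forall>y\<in>C. \<forall>t::real. x \<noteq> y \<and> 0 < t \<and> t < 1 \<longrightarrow>
        f ((1 - t) *\<^sub>R x + t *\<^sub>R y) < ereal (1 - t) * f x + ereal t * f y)"

definition essentially_smooth :: "('a::euclidean_space \<Rightarrow> ereal) \<Rightarrow> bool" where
  "essentially_smooth f \<longleftrightarrow>
     interior (edom f) \<noteq> {} \<and>
     (\<forall>x\<in>interior (edom f). edifferentiable f x) \<and>
     (\<forall>z z0. (\<forall>k. z k \<in> interior (edom f)) \<longrightarrow> z \<longlonglongrightarrow> z0 \<longrightarrow> z0 \<in> frontier (edom f) \<longrightarrow>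
        filterlim (\<lambda>k. norm (egrad f (z k))) at_top sequentially)"

definition essentially_strictly_convex :: "('a::euclidean_space \<Rightarrow> ereal) \<Rightarrow> bool" where
  "essentially_strictly_convex f \<longleftrightarrow>
     (\<forall>C. convex C \<and> C \<subseteq> dom_subdiff f \<longrightarrow> strictly_convex_on_efun C f)"

definition legendre :: "('a::euclidean_space \<Rightarrow> ereal) \<Rightarrow> bool" where
  "legendre f \<longleftrightarrow> essentially_smooth f \<and> essentially_strictly_convex f"

text \<open>Bregman distance (extended-real valued; equals +\<infinity> if a is outside dom f).\<close>
definition bregman :: "('a::euclidean_space \<Rightarrow> ereal) \<Rightarrow> 'a \<Rightarrow> 'a \<Rightarrow> ereal" where
  "bregman f a c = f a - f c - ereal (inner (egrad f c) (a - c))"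

definition self_concordant_on :: "'a::euclidean_space set \<Rightarrow> ('a \<Rightarrow> real) \<Rightarrow> real \<Rightarrow> bool" where
  "self_concordant_on Q h M \<longleftrightarrow> open Q \<and> M > 0 \<and>
    (\<exists>(D1 :: 'a \<Rightarrow> ('a \<Rightarrow>\<^sub>L real)) (D2 :: 'a \<Rightarrow> ('a \<Rightarrow>\<^sub>L ('a \<Rightarrow>\<^sub>L real)))
       (D3 :: 'a \<Rightarrow> ('a \<Rightarrow>\<^sub>L ('a \<Rightarrow>\<^sub>L ('a \<Rightarrow>\<^sub>L real)))).
       (\<forall>x\<in>Q. (h has_derivative blinfun_apply (D1 x)) (at x)) \<and>
       (\<forall>x\<in>Q. (D1 has_derivative blinfun_apply (D2 x)) (at x)) \<and>
       (\<forall>x\<in>Q. (D2 has_derivative blinfun_apply (D3 x)) (at x)) \<and>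
       continuous_on Q D3 \<and>
       (\<forall>x\<in>Q. \<forall>u. \<bar>blinfun_apply (blinfun_apply (blinfun_apply (D3 x) u) u) u\<bar>
            \<le> 2 * M * (blinfun_apply (blinfun_apply (D2 x) u) u) powr (3/2)))"

definition strongly_self_concordant_on :: "'a::euclidean_space set \<Rightarrow> ('a \<Rightarrow> real) \<Rightarrow> real \<Rightarrow> bool" where
  "strongly_self_concordant_on Q h M \<longleftrightarrow> self_concordant_on Q h M \<and>
     (\<forall>\<alpha>. closed {x\<in>Q. h x \<le> \<alpha>})"

end

(* Let y = grad psi(s) - e and let z minimize psi - <y,.> over int dom psi: y in int dom psi^*
   makes the tilted sublevel sets bounded, strong self-concordance makes them closed.  The
   self-concordant Taylor bound gives the tilted function quadratic-then-linear growth away from z,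
   which makes psi^* differentiable at y with gradient z; so x+(s) = z.
   With u = z - s, a = Hess psi(s)^-1 e, sigma^2 = <e, a> = D2 psi(s)[a,a] and r^2 = D2 psi(s)[u,u],
   self-concordance gives <grad psi(z) - grad psi(s), u> >= r^2 / (1 + M r), while this quantity
   equals -<e, u> = -D2 psi(s)[a,u] <= sigma r.  Hence r <= sigma / (1 - M sigma) <= 3 sigma / 2,
   and by convexity D_psi(z, s) <= <grad psi(z) - grad psi(s), u> <= 3 sigma^2 / 2. *)

theory Submission
  imports Defs
begin

lemma has_vector_derivative_along_line:
  fixes F :: "'a::real_normed_vector \<Rightarrow> 'b::real_normed_vector"
  assumes "(F has_derivative F') (at (a + t *\<^sub>R u))"
  shows "((\<lambda>t. F (a + t *\<^sub>R u)) has_vector_derivative F' u) (at t)"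
proof -
  have "((\<lambda>r. a + r *\<^sub>R u) has_derivative (\<lambda>r. r *\<^sub>R u)) (at t)"
    by (intro derivative_eq_intros) auto
  then have "((\<lambda>r. F (a + r *\<^sub>R u)) has_derivative (\<lambda>r. F' (r *\<^sub>R u))) (at t)"
    by (rule has_derivative_compose) (simp add: assms)
  moreover have "bounded_linear F'"
    using assms has_derivative_bounded_linear by blast
  ultimately show ?thesis
    unfolding has_vector_derivative_def by (simp add: linear_simps)
qed

lemma has_real_derivative_along_line:
  fixes F :: "'a::real_normed_vector \<Rightarrow> real"
  assumes "(F has_derivative F') (at (a + t *\<^sub>R u))"
  shows "((\<lambda>t. F (a + t *\<^sub>R u)) has_real_derivative F' u) (at t)"
  using has_vector_derivative_along_line[OF assms] has_real_derivative_iff_has_vector_derivative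
  by blast

lemma has_real_derivative_blinfun_along_line:
  fixes F :: "'a::real_normed_vector \<Rightarrow> 'a \<Rightarrow>\<^sub>L real"
  assumes "(F has_derivative blinfun_apply F') (at (a + t *\<^sub>R u))"
  shows "((\<lambda>t. F (a + t *\<^sub>R u) v) has_real_derivative F' u v) (at t)"
  using bounded_linear.has_vector_derivative[OF bounded_linear_apply_blinfun
      has_vector_derivative_along_line[OF assms]]
  by (simp add: has_real_derivative_iff_has_vector_derivative)

lemma has_real_derivative_blinfun2_along_line:
  fixes F :: "'a::real_normed_vector \<Rightarrow> 'a \<Rightarrow>\<^sub>L 'a \<Rightarrow>\<^sub>L real"
  assumes "(F has_derivative blinfun_apply F') (at (a + t *\<^sub>R u))"
  shows "((\<lambda>t. F (a + t *\<^sub>R u) v w) has_real_derivative F' u v w) (at t)"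
  using bounded_linear.has_vector_derivative[OF bounded_linear_apply_blinfun
      bounded_linear.has_vector_derivative[OF bounded_linear_apply_blinfun
        has_vector_derivative_along_line[OF assms]]]
  by (simp add: has_real_derivative_iff_has_vector_derivative)

lemma second_difference_bound:
  fixes f :: "'a::real_normed_vector \<Rightarrow> real" and B :: "'a \<Rightarrow>\<^sub>L 'a \<Rightarrow>\<^sub>L real"
  assumes "0 < t"
    and f': "\<And>z. z \<in> U \<Longrightarrow> (f has_derivative blinfun_apply (D z)) (at z)"
    and in_U: "\<And>r s. 0 \<le> r \<Longrightarrow> r \<le> t \<Longrightarrow> 0 \<le> s \<Longrightarrow> s \<le> t \<Longrightarrow> x + (r *\<^sub>R u + s *\<^sub>R v) \<in> U"
    and remainder: "\<And>r s. 0 \<le> r \<Longrightarrow> r \<le> t \<Longrightarrow> 0 \<le> s \<Longrightarrow> s \<le> t \<Longrightarrow>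
           \<bar>D (x + (r *\<^sub>R u + s *\<^sub>R v)) v - D x v - B (r *\<^sub>R u + s *\<^sub>R v) v\<bar> \<le> b"
  shows "\<bar>f (x + t *\<^sub>R u + t *\<^sub>R v) - f (x + t *\<^sub>R u) - f (x + t *\<^sub>R v) + f x - t\<^sup>2 * B u v\<bar> \<le> 2 * t * b"
proof -
  define g where "g s = f (x + t *\<^sub>R u + s *\<^sub>R v) - f (x + s *\<^sub>R v)" for s
  have "(g has_real_derivative D (x + t *\<^sub>R u + s *\<^sub>R v) v - D (x + s *\<^sub>R v) v) (at s)"
    if "0 \<le> s" "s \<le> t" for s
    unfolding g_def using in_U[of t s] in_U[of 0 s] that \<open>0 < t\<close>
    by (intro DERIV_diff has_real_derivative_along_line f') (simp_all add: add.assoc)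
  then obtain z where "0 < z" "z < t"
    and mvt: "g t - g 0 = t * (D (x + t *\<^sub>R u + z *\<^sub>R v) v - D (x + z *\<^sub>R v) v)"
    using MVT2[of 0 t g] \<open>0 < t\<close> by fastforce
  define R where "R w = D (x + w) v - D x v - B w v" for w
  have "f (x + t *\<^sub>R u + t *\<^sub>R v) - f (x + t *\<^sub>R u) - f (x + t *\<^sub>R v) + f x - t\<^sup>2 * B u v
      = t * (R (t *\<^sub>R u + z *\<^sub>R v) - R (0 *\<^sub>R u + z *\<^sub>R v))"
    using mvt unfolding g_def R_def
    by (simp add: add.assoc power2_eq_square algebra_simps blinfun.bilinear_simps)
  also have "\<bar>\<dots>\<bar> \<le> t * (2 * b)"
  proof -
    have "\<bar>R (t *\<^sub>R u + z *\<^sub>R v)\<bar> \<le> b" "\<bar>R (0 *\<^sub>R u + z *\<^sub>R v)\<bar> \<le> b"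
      using remainder[of t z] remainder[of 0 z] \<open>0 < z\<close> \<open>z < t\<close> unfolding R_def by auto
    then have "\<bar>R (t *\<^sub>R u + z *\<^sub>R v) - R (0 *\<^sub>R u + z *\<^sub>R v)\<bar> \<le> 2 * b"
      by linarith
    then show ?thesis
      using \<open>0 < t\<close> by (simp only: abs_mult abs_of_pos mult_left_mono)
  qed
  finally show ?thesis
    by simp
qed

lemma blinfun_derivative_remainder:
  fixes D :: "'a::real_normed_vector \<Rightarrow> 'a \<Rightarrow>\<^sub>L real"
  assumes "(D has_derivative blinfun_apply B) (at x)" "e > 0"
  shows "\<exists>d>0. \<forall>w. norm w < d \<longrightarrow> \<bar>D (x + w) v - D x v - B w v\<bar> \<le> e * norm w"
proof -
  obtain d where "d > 0" and d: "\<And>y. norm (y - x) < d \<Longrightarrow>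
      norm (D y - D x - B (y - x)) \<le> e / (norm v + 1) * norm (y - x)"
  proof -
    have "e / (norm v + 1) > 0"
      using assms(2) by (simp add: add_nonneg_pos)
    then show ?thesis
      using assms(1)[unfolded has_derivative_at_alt] that by blast
  qed
  have "\<bar>D (x + w) v - D x v - B w v\<bar> \<le> e * norm w" if "norm w < d" for w
  proof -
    have "\<bar>D (x + w) v - D x v - B w v\<bar> \<le> norm (D (x + w) - D x - B w) * norm v"
      using norm_blinfun[of "D (x + w) - D x - B w" v] by (simp add: blinfun.diff_left)
    also have "\<dots> \<le> e / (norm v + 1) * norm w * norm v"
      using d[of "x + w"] that by (intro mult_right_mono) auto
    also have "\<dots> = e * norm w * (norm v / (norm v + 1))"
      by simp
    also have "\<dots> \<le> e * norm w"
      using \<open>e > 0\<close> by (intro mult_left_le) (simp_all add: divide_le_eq_1 add_nonneg_pos)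
    finally show ?thesis .
  qed
  then show ?thesis
    using \<open>d > 0\<close> by blast
qed

lemma second_difference_tendsto:
  fixes f :: "'a::real_normed_vector \<Rightarrow> real"
  assumes "open U" "x \<in> U"
    and f': "\<And>z. z \<in> U \<Longrightarrow> (f has_derivative blinfun_apply (D z)) (at z)"
    and f'': "(D has_derivative blinfun_apply B) (at x)"
  shows "((\<lambda>t. (f (x + t *\<^sub>R u + t *\<^sub>R v) - f (x + t *\<^sub>R u) - f (x + t *\<^sub>R v) + f x) / t\<^sup>2)
           \<longlongrightarrow> B u v) (at_right 0)"
proof (rule tendstoI)
  fix e :: real assume "e > 0"
  define C where "C = 2 * (norm u + norm v) + 1"
  have "C > 0"
    by (simp add: C_def add_nonneg_pos)
  obtain d0 where "d0 > 0" and d0: "ball x d0 \<subseteq> U"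
    using assms(1,2) open_contains_ball by blast
  obtain d1 where "d1 > 0" and d1: "\<And>w. norm w < d1 \<Longrightarrow> \<bar>D (x + w) v - D x v - B w v\<bar> \<le> e / C * norm w"
    using blinfun_derivative_remainder[OF f''] \<open>e > 0\<close> \<open>C > 0\<close> by (meson divide_pos_pos)
  define d where "d = min d0 d1 / (norm u + norm v + 1)"
  have "d > 0"
    using \<open>d0 > 0\<close> \<open>d1 > 0\<close> by (simp add: d_def add_nonneg_pos)
  show "\<forall>\<^sub>F t in at_right 0. dist ((f (x + t *\<^sub>R u + t *\<^sub>R v) - f (x + t *\<^sub>R u)
      - f (x + t *\<^sub>R v) + f x) / t\<^sup>2) (B u v) < e"
    unfolding eventually_at_right_field
  proof (intro exI[of _ d] conjI allI impI \<open>d > 0\<close>)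
    fix t :: real assume "0 < t" "t < d"
    then have "t * (norm u + norm v) < min d0 d1"
      by (simp add: d_def pos_less_divide_eq add_nonneg_pos distrib_left)
    moreover have norm_le: "norm (r *\<^sub>R u + s *\<^sub>R v) \<le> t * (norm u + norm v)"
      if "0 \<le> r" "r \<le> t" "0 \<le> s" "s \<le> t" for r s
      using that norm_triangle_le[of "r *\<^sub>R u" "s *\<^sub>R v"]
        mult_right_mono[of r t "norm u"] mult_right_mono[of s t "norm v"]
      by (simp add: distrib_left)
    ultimately have near: "norm (r *\<^sub>R u + s *\<^sub>R v) < min d0 d1"
      if "0 \<le> r" "r \<le> t" "0 \<le> s" "s \<le> t" for r s
      using that by fastforce
    have "x + (r *\<^sub>R u + s *\<^sub>R v) \<in> U" if "0 \<le> r" "r \<le> t" "0 \<le> s" "s \<le> t" for r s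
    proof -
      have "norm (r *\<^sub>R u + s *\<^sub>R v) < d0"
        using near[OF that] by simp
      then show ?thesis
        using d0 by (metis add_diff_cancel_left' dist_commute dist_norm mem_ball subsetD)
    qed
    moreover have "\<bar>D (x + (r *\<^sub>R u + s *\<^sub>R v)) v - D x v - B (r *\<^sub>R u + s *\<^sub>R v) v\<bar>
        \<le> e / C * (t * (norm u + norm v))" if "0 \<le> r" "r \<le> t" "0 \<le> s" "s \<le> t" for r s
    proof -
      have "\<bar>D (x + (r *\<^sub>R u + s *\<^sub>R v)) v - D x v - B (r *\<^sub>R u + s *\<^sub>R v) v\<bar>
          \<le> e / C * norm (r *\<^sub>R u + s *\<^sub>R v)"
        using d1 near[OF that] by simp
      also have "\<dots> \<le> e / C * (t * (norm u + norm v))"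
        using norm_le[OF that] \<open>e > 0\<close> \<open>C > 0\<close> by (intro mult_left_mono) auto
      finally show ?thesis .
    qed
    ultimately have "\<bar>f (x + t *\<^sub>R u + t *\<^sub>R v) - f (x + t *\<^sub>R u) - f (x + t *\<^sub>R v) + f x - t\<^sup>2 * B u v\<bar>
        \<le> 2 * t * (e / C * (t * (norm u + norm v)))"
      by (intro second_difference_bound[OF \<open>0 < t\<close> f'])
    also have "\<dots> = t\<^sup>2 * e * (2 * (norm u + norm v) / C)"
      by (simp add: power2_eq_square)
    also have "\<dots> < t\<^sup>2 * e"
    proof -
      have "2 * (norm u + norm v) / C < 1"
        using \<open>C > 0\<close> by (simp add: C_def)
      moreover have "t\<^sup>2 * e * q < t\<^sup>2 * e" if "q < 1" for q
        using that \<open>0 < t\<close> \<open>e > 0\<close> by simp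
      ultimately show ?thesis
        by blast
    qed
    finally show "dist ((f (x + t *\<^sub>R u + t *\<^sub>R v) - f (x + t *\<^sub>R u)
        - f (x + t *\<^sub>R v) + f x) / t\<^sup>2) (B u v) < e"
      using \<open>0 < t\<close> by (simp add: dist_real_def field_simps)
  qed
qed

lemma second_derivative_symmetric:
  fixes f :: "'a::real_normed_vector \<Rightarrow> real"
  assumes "open U" "x \<in> U"
    and "\<And>z. z \<in> U \<Longrightarrow> (f has_derivative blinfun_apply (D z)) (at z)"
    and "(D has_derivative blinfun_apply B) (at x)"
  shows "B u v = B v u"
proof (rule tendsto_unique[OF trivial_limit_at_right_real])
  show "((\<lambda>t. (f (x + t *\<^sub>R u + t *\<^sub>R v) - f (x + t *\<^sub>R u) - f (x + t *\<^sub>R v) + f x) / t\<^sup>2)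
      \<longlongrightarrow> B u v) (at_right 0)"
    using second_difference_tendsto[OF assms] .
  show "((\<lambda>t. (f (x + t *\<^sub>R u + t *\<^sub>R v) - f (x + t *\<^sub>R u) - f (x + t *\<^sub>R v) + f x) / t\<^sup>2)
      \<longlongrightarrow> B v u) (at_right 0)"
    using second_difference_tendsto[OF assms, of v u] by (simp add: algebra_simps)
qed

lemma linear_minus_min_quadratic_le:
  fixes c \<epsilon> \<rho> r :: real
  assumes "0 < c" "\<epsilon> \<le> c * \<rho>" "0 \<le> r"
  shows "\<epsilon> * r - c * min (r\<^sup>2) (\<rho> * r) \<le> \<epsilon>\<^sup>2 / (4 * c)"
proof (cases "r \<le> \<rho>")
  case True
  then have "min (r\<^sup>2) (\<rho> * r) = r\<^sup>2"
    using assms(3) by (simp add: power2_eq_square mult_right_mono)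
  moreover have "4 * c * (\<epsilon> * r - c * r\<^sup>2) \<le> \<epsilon>\<^sup>2"
    using zero_le_power2[of "\<epsilon> - 2 * c * r"] by (simp add: power2_eq_square algebra_simps)
  ultimately show ?thesis
    using assms(1) by (simp add: pos_le_divide_eq mult.commute)
next
  case False
  then have "min (r\<^sup>2) (\<rho> * r) = \<rho> * r"
    using assms(3) by (simp add: power2_eq_square mult_right_mono)
  moreover have "r * (\<epsilon> - c * \<rho>) \<le> 0"
    using assms by (simp add: mult_nonneg_nonpos)
  moreover have "0 \<le> \<epsilon>\<^sup>2 / (4 * c)"
    using assms(1) by simp
  ultimately show ?thesis
    by (simp add: algebra_simps)
qed

lemma has_derivative_of_quadratic_remainder:
  fixes F :: "'a::real_normed_vector \<Rightarrow> real"
  assumes "bounded_linear L" "d > 0"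
    and remainder: "\<And>y'. norm (y' - y) < d \<Longrightarrow> \<bar>F y' - F y - L (y' - y)\<bar> \<le> K * (norm (y' - y))\<^sup>2"
  shows "(F has_derivative L) (at y)"
  unfolding has_derivative_at_alt
proof (intro conjI allI impI assms(1))
  fix e :: real assume "e > 0"
  define d' where "d' = min d (e / (\<bar>K\<bar> + 1))"
  have "d' > 0"
    using \<open>d > 0\<close> \<open>e > 0\<close> by (simp add: d'_def)
  moreover have "norm (F y' - F y - L (y' - y)) \<le> e * norm (y' - y)" if "norm (y' - y) < d'" for y'
  proof -
    have "\<bar>F y' - F y - L (y' - y)\<bar> \<le> (\<bar>K\<bar> + 1) * norm (y' - y) * norm (y' - y)"
      using remainder[of y'] that abs_ge_self[of K]
        mult_right_mono[of K "\<bar>K\<bar> + 1" "(norm (y' - y))\<^sup>2"]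
      by (simp add: d'_def power2_eq_square mult.assoc)
    also have "\<dots> \<le> e * norm (y' - y)"
      using that by (intro mult_right_mono) (auto simp: d'_def pos_less_divide_eq mult.commute)
    finally show ?thesis
      by simp
  qed
  ultimately show "\<exists>d>0. \<forall>y'. norm (y' - y) < d \<longrightarrow> norm (F y' - F y - L (y' - y)) \<le> e * norm (y' - y)"
    by blast
qed

lemma newton_radius_bound:
  fixes M \<sigma> r P :: real
  assumes "0 \<le> \<sigma>" "0 \<le> r" "0 < M" "M * \<sigma> < 1/3"
    and "r\<^sup>2 / (1 + M * r) \<le> P" "P \<le> \<sigma> * r"
  shows "r \<le> 3/2 * \<sigma>"
proof (cases "r = 0")
  case False
  have "1 + M * r > 0"
    using assms(2,3) by (simp add: add_pos_nonneg)
  then have "r\<^sup>2 \<le> P * (1 + M * r)"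
    using assms(5) by (simp add: pos_divide_le_eq)
  also have "\<dots> \<le> \<sigma> * r * (1 + M * r)"
    using assms(6) \<open>1 + M * r > 0\<close> by (intro mult_right_mono) auto
  finally have "r * r \<le> r * (\<sigma> * (1 + M * r))"
    by (simp add: power2_eq_square algebra_simps)
  then have "r \<le> \<sigma> * (1 + M * r)"
    using False assms(2) by (simp add: mult_le_cancel_left_pos)
  then have "r \<le> \<sigma> + (M * \<sigma>) * r"
    by (simp add: algebra_simps)
  moreover have "(M * \<sigma>) * r \<le> r / 3"
    using assms(2,4) mult_right_mono[of "M * \<sigma>" "1/3" r] by simp
  ultimately show ?thesis
    by linarith
qed (use assms(1) in simp)

locale nondegenerate_self_concordant =
  fixes U :: "'a::euclidean_space set" and f :: "'a \<Rightarrow> real" and M :: real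
    and D1 :: "'a \<Rightarrow> 'a \<Rightarrow>\<^sub>L real"
    and D2 :: "'a \<Rightarrow> 'a \<Rightarrow>\<^sub>L 'a \<Rightarrow>\<^sub>L real"
    and D3 :: "'a \<Rightarrow> 'a \<Rightarrow>\<^sub>L 'a \<Rightarrow>\<^sub>L 'a \<Rightarrow>\<^sub>L real"
  assumes open_U: "open U" and convex_U: "convex U" and M_pos: "M > 0"
    and has_derivative_f: "\<And>x. x \<in> U \<Longrightarrow> (f has_derivative D1 x) (at x)"
    and has_derivative_D1: "\<And>x. x \<in> U \<Longrightarrow> (D1 has_derivative D2 x) (at x)"
    and has_derivative_D2: "\<And>x. x \<in> U \<Longrightarrow> (D2 has_derivative D3 x) (at x)"
    and self_concordant: "\<And>x u. x \<in> U \<Longrightarrow> \<bar>D3 x u u u\<bar> \<le> 2 * M * D2 x u u powr (3/2)"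
    and D2_pos: "\<And>x u. x \<in> U \<Longrightarrow> u \<noteq> 0 \<Longrightarrow> D2 x u u > 0"
begin

lemma D2_symmetric: "x \<in> U \<Longrightarrow> D2 x u v = D2 x v u"
  using second_derivative_symmetric[OF open_U _ has_derivative_f has_derivative_D1] by blast

lemma D2_scaleR: "D2 x (c *\<^sub>R u) (c *\<^sub>R u) = c\<^sup>2 * D2 x u u"
  by (simp add: blinfun.scaleR_left blinfun.scaleR_right power2_eq_square)

lemma D2_nonneg: "x \<in> U \<Longrightarrow> D2 x u u \<ge> 0"
  using D2_pos[of x u] by (cases "u = 0") auto

lemma D2_Cauchy_Schwarz:
  assumes "x \<in> U"
  shows "(D2 x a u)\<^sup>2 \<le> D2 x a a * D2 x u u"
proof (cases "u = 0")
  case False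
  define q where "q = D2 x u u"
  have "q > 0"
    unfolding q_def using D2_pos[OF assms False] .
  define t where "t = D2 x a u / q"
  have "0 \<le> D2 x (a - t *\<^sub>R u) (a - t *\<^sub>R u)"
    using D2_nonneg[OF assms] .
  also have "\<dots> = D2 x a a - t * D2 x a u - t * D2 x u a + t\<^sup>2 * q"
    by (simp add: q_def blinfun.bilinear_simps power2_eq_square algebra_simps)
  also have "\<dots> = D2 x a a - (D2 x a u)\<^sup>2 / q"
    using \<open>q > 0\<close> D2_symmetric[OF assms, of u a]
    by (simp add: t_def power2_eq_square field_simps)
  finally show ?thesis
    using \<open>q > 0\<close> by (simp add: q_def pos_divide_le_eq)
qed simp

lemma D2_upper_bound: "D2 x u u \<le> norm (D2 x) * (norm u)\<^sup>2"
proof -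
  have "\<bar>D2 x u u\<bar> \<le> norm (D2 x u) * norm u"
    using norm_blinfun[of "D2 x u" u] by simp
  also have "\<dots> \<le> norm (D2 x) * norm u * norm u"
    using norm_blinfun[of "D2 x" u] by (simp add: mult_right_mono)
  finally show ?thesis
    by (simp add: power2_eq_square mult.assoc)
qed

lemma D2_lower_bound:
  assumes "x \<in> U"
  shows "\<exists>m>0. \<forall>u. m * (norm u)\<^sup>2 \<le> D2 x u u"
proof -
  have "sphere (0::'a) 1 \<noteq> {}"
    by simp
  moreover have "continuous_on (sphere 0 1) (\<lambda>u. D2 x u u)"
    by (intro continuous_intros)
  ultimately obtain u0 where "u0 \<in> sphere 0 1" and u0: "\<forall>u\<in>sphere 0 1. D2 x u0 u0 \<le> D2 x u u"
    using continuous_attains_inf[OF compact_sphere] by blast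
  then have "D2 x u0 u0 > 0"
    using D2_pos[OF assms, of u0] by (metis mem_sphere_0 norm_zero zero_neq_one)
  moreover have "D2 x u0 u0 * (norm u)\<^sup>2 \<le> D2 x u u" for u
  proof (cases "u = 0")
    case False
    then have "D2 x u0 u0 \<le> D2 x (inverse (norm u) *\<^sub>R u) (inverse (norm u) *\<^sub>R u)"
      using u0 by simp
    also have "\<dots> = D2 x u u / (norm u)\<^sup>2"
      by (simp only: D2_scaleR) (simp add: power_inverse divide_inverse_commute)
    finally show ?thesis
      using False by (simp add: pos_le_divide_eq)
  qed simp
  ultimately show ?thesis
    by blast
qed

lemma segment_in_U:
  assumes "a \<in> U" "a + u \<in> U" "0 \<le> t" "t \<le> 1"
  shows "a + t *\<^sub>R u \<in> U"
proof -
  have "a + t *\<^sub>R u = (1 - t) *\<^sub>R a + t *\<^sub>R (a + u)"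
    by (simp add: algebra_simps)
  then show ?thesis
    using convexD[OF convex_U assms(1,2)] assms(3,4) by simp
qed

text \<open>Self-concordance says exactly that \<open>\<tau> \<mapsto> D2 (a + \<tau> u) u u ^ (-1/2)\<close> has slope
  at most \<open>M\<close>.\<close>
lemma inverse_sqrt_D2_along_segment:
  assumes a: "a \<in> U" "a + u \<in> U" and "u \<noteq> 0" and t: "0 \<le> t" "t \<le> 1"
  shows "inverse (sqrt (D2 (a + t *\<^sub>R u) u u)) \<le> inverse (sqrt (D2 a u u)) + M * t"
proof -
  define q where "q \<tau> = D2 (a + \<tau> *\<^sub>R u) u u" for \<tau>
  define q' where "q' \<tau> = D3 (a + \<tau> *\<^sub>R u) u u u" for \<tau>
  define w' where "w' \<tau> = - q' \<tau> / (2 * (q \<tau> * sqrt (q \<tau>)))" for \<tau>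
  have "M * 0 - inverse (sqrt (q 0)) \<le> M * t - inverse (sqrt (q t))"
  proof (rule DERIV_nonneg_imp_nondecreasing[OF t(1)])
    fix \<tau> assume "0 \<le> \<tau>" "\<tau> \<le> t"
    then have \<tau>U: "a + \<tau> *\<^sub>R u \<in> U"
      using segment_in_U[OF a] t by simp
    then have "q \<tau> > 0"
      unfolding q_def using D2_pos \<open>u \<noteq> 0\<close> by blast
    have "(q has_real_derivative q' \<tau>) (at \<tau>)"
      unfolding q_def q'_def using \<tau>U by (intro has_real_derivative_blinfun2_along_line has_derivative_D2)
    then have "((\<lambda>\<tau>. inverse (sqrt (q \<tau>))) has_real_derivative w' \<tau>) (at \<tau>)"
      using \<open>q \<tau> > 0\<close> unfolding w'_def
      by (auto intro!: derivative_eq_intros simp: field_simps power2_eq_square)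
    then have "((\<lambda>\<tau>. M * \<tau> - inverse (sqrt (q \<tau>))) has_real_derivative M * 1 - w' \<tau>) (at \<tau>)"
      by (intro DERIV_diff DERIV_cmult DERIV_ident)
    moreover have "q \<tau> powr (3/2) = q \<tau> * sqrt (q \<tau>)"
      using \<open>q \<tau> > 0\<close> powr_add[of "q \<tau>" 1 "1/2"] by (simp add: powr_half_sqrt)
    then have "\<bar>q' \<tau>\<bar> \<le> 2 * M * (q \<tau> * sqrt (q \<tau>))"
      using self_concordant[OF \<tau>U, of u] unfolding q_def q'_def by simp
    then have "w' \<tau> \<le> M"
      using \<open>q \<tau> > 0\<close> unfolding w'_def by (subst pos_divide_le_eq) (auto simp: mult_ac)
    ultimately show "\<exists>y. ((\<lambda>\<tau>. M * \<tau> - inverse (sqrt (q \<tau>))) has_real_derivative y) (at \<tau>) \<and> 0 \<le> y"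
      by force
  qed
  then show ?thesis
    unfolding q_def by simp
qed

lemma D2_along_segment_lower_bound:
  assumes a: "a \<in> U" "a + u \<in> U" and t: "0 \<le> t" "t \<le> 1"
  shows "D2 a u u / (1 + M * sqrt (D2 a u u) * t)\<^sup>2 \<le> D2 (a + t *\<^sub>R u) u u"
proof (cases "u = 0")
  case False
  define r where "r = sqrt (D2 a u u)"
  define q where "q = D2 (a + t *\<^sub>R u) u u"
  have "r > 0" "q > 0"
    using D2_pos[OF _ False] a segment_in_U[OF a t] by (simp_all add: r_def q_def)
  have "1 + M * r * t > 0"
    using M_pos \<open>r > 0\<close> t by (simp add: add_pos_nonneg)
  have "inverse (sqrt q) \<le> inverse r + M * t"
    using inverse_sqrt_D2_along_segment[OF a False t] by (simp add: q_def r_def)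
  also have "\<dots> = (1 + M * r * t) / r"
    using \<open>r > 0\<close> by (simp add: field_simps)
  finally have "r / (1 + M * r * t) \<le> sqrt q"
    using \<open>r > 0\<close> \<open>q > 0\<close> \<open>1 + M * r * t > 0\<close> by (simp add: field_simps)
  then have "(r / (1 + M * r * t))\<^sup>2 \<le> q"
    using \<open>r > 0\<close> \<open>q > 0\<close> \<open>1 + M * r * t > 0\<close> power_mono[of _ "sqrt q" 2] by fastforce
  then show ?thesis
    using D2_nonneg[OF a(1), of u] by (simp add: power_divide r_def q_def)
qed simp

lemma D1_increment_lower_bound:
  assumes a: "a \<in> U" "a + u \<in> U"
  shows "D2 a u u / (1 + M * sqrt (D2 a u u)) \<le> D1 (a + u) u - D1 a u"
proof -
  define c where "c = D2 a u u"
  define r where "r = sqrt c"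
  have "c \<ge> 0" "r \<ge> 0"
    using D2_nonneg[OF a(1)] by (simp_all add: c_def r_def)
  define k where "k \<tau> = D1 (a + \<tau> *\<^sub>R u) u - c * \<tau> / (1 + M * r * \<tau>)" for \<tau>
  have "k 0 \<le> k 1"
  proof (rule DERIV_nonneg_imp_nondecreasing[of 0 1])
    fix \<tau> :: real assume \<tau>: "0 \<le> \<tau>" "\<tau> \<le> 1"
    have "1 + M * r * \<tau> > 0"
      using M_pos \<open>r \<ge> 0\<close> \<tau> by (simp add: add_pos_nonneg)
    have "((\<lambda>\<tau>. D1 (a + \<tau> *\<^sub>R u) u) has_real_derivative D2 (a + \<tau> *\<^sub>R u) u u) (at \<tau>)"
      using segment_in_U[OF a \<tau>] by (intro has_real_derivative_blinfun_along_line has_derivative_D1)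
    then have "(k has_real_derivative D2 (a + \<tau> *\<^sub>R u) u u - c / (1 + M * r * \<tau>)\<^sup>2) (at \<tau>)"
      unfolding k_def using \<open>1 + M * r * \<tau> > 0\<close>
      by (auto intro!: derivative_eq_intros simp: field_simps power2_eq_square)
    moreover have "c / (1 + M * r * \<tau>)\<^sup>2 \<le> D2 (a + \<tau> *\<^sub>R u) u u"
      using D2_along_segment_lower_bound[OF a \<tau>] by (simp add: c_def r_def)
    ultimately show "\<exists>y. (k has_real_derivative y) (at \<tau>) \<and> 0 \<le> y"
      by force
  qed simp
  then show ?thesis
    by (simp add: k_def c_def r_def)
qed

lemma taylor_lower_bound:
  assumes a: "a \<in> U" "a + u \<in> U"
  shows "D2 a u u / (2 * (1 + M * sqrt (D2 a u u))) \<le> f (a + u) - f a - D1 a u"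
proof -
  define c where "c = D2 a u u"
  define r where "r = sqrt c"
  have "c \<ge> 0" "r \<ge> 0"
    using D2_nonneg[OF a(1)] by (simp_all add: c_def r_def)
  define K where "K = c / (2 * (1 + M * r))"
  define k where "k \<tau> = f (a + \<tau> *\<^sub>R u) - D1 a u * \<tau> - K * \<tau>\<^sup>2" for \<tau>
  have "k 0 \<le> k 1"
  proof (rule DERIV_nonneg_imp_nondecreasing[of 0 1])
    fix \<tau> :: real assume \<tau>: "0 \<le> \<tau>" "\<tau> \<le> 1"
    have "((\<lambda>\<tau>. f (a + \<tau> *\<^sub>R u)) has_real_derivative D1 (a + \<tau> *\<^sub>R u) u) (at \<tau>)"
      using segment_in_U[OF a \<tau>] by (intro has_real_derivative_along_line has_derivative_f)
    then have "(k has_real_derivative D1 (a + \<tau> *\<^sub>R u) u - D1 a u - 2 * K * \<tau>) (at \<tau>)"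
      unfolding k_def by (auto intro!: derivative_eq_intros)
    moreover have "2 * K * \<tau> \<le> D1 (a + \<tau> *\<^sub>R u) u - D1 a u"
    proof (cases "\<tau> = 0")
      case False
      then have "\<tau> > 0"
        using \<tau> by simp
      have "\<tau> * (\<tau> * c / (1 + M * (\<tau> * r))) \<le> \<tau> * (D1 (a + \<tau> *\<^sub>R u) u - D1 a u)"
        using D1_increment_lower_bound[OF a(1) segment_in_U[OF a \<tau>]] \<tau>
        unfolding D2_scaleR
        by (simp add: c_def r_def real_sqrt_mult blinfun.scaleR_right right_diff_distrib power2_eq_square)
      then have "\<tau> * c / (1 + M * (\<tau> * r)) \<le> D1 (a + \<tau> *\<^sub>R u) u - D1 a u"
        using \<open>\<tau> > 0\<close> by (rule mult_left_le_imp_le)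
      moreover have "\<tau> * c / (1 + M * r) \<le> \<tau> * c / (1 + M * (\<tau> * r))"
        using M_pos \<open>r \<ge> 0\<close> \<open>c \<ge> 0\<close> \<tau>
        by (intro frac_le) (auto simp: add_pos_nonneg mult_left_le_one_le)
      moreover have "1 + M * r > 0"
        using M_pos \<open>r \<ge> 0\<close> by (simp add: add_pos_nonneg)
      then have "2 * K * \<tau> = \<tau> * c / (1 + M * r)"
        by (simp add: K_def field_simps)
      ultimately show ?thesis
        by linarith
    qed simp
    ultimately show "\<exists>y. (k has_real_derivative y) (at \<tau>) \<and> 0 \<le> y"
      by force
  qed simp
  then show ?thesis
    by (simp add: k_def K_def c_def r_def)
qed

lemma first_order_convexity:
  assumes "a \<in> U" "b \<in> U"
  shows "f a + D1 a (b - a) \<le> f b"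
proof -
  have "0 \<le> D2 a (b - a) (b - a) / (2 * (1 + M * sqrt (D2 a (b - a) (b - a))))"
    using D2_nonneg[OF assms(1)] M_pos by (simp add: add_pos_nonneg)
  also have "\<dots> \<le> f b - f a - D1 a (b - a)"
    using taylor_lower_bound[of a "b - a"] assms by simp
  finally show ?thesis
    by simp
qed

lemma newton_step_bound:
  assumes "s \<in> U" "x \<in> U"
    and small: "M * sqrt (D2 s a a) < 1/3"
    and D1_x: "\<And>h. D1 x h - D1 s h = - D2 s a h"
  shows "f x - f s - D1 s (x - s) \<le> 3/2 * D2 s a a"
proof -
  define u where "u = x - s"
  define \<sigma> where "\<sigma> = sqrt (D2 s a a)"
  define r where "r = sqrt (D2 s u u)"
  have "\<sigma> \<ge> 0" "r \<ge> 0" and \<sigma>_sq: "\<sigma>\<^sup>2 = D2 s a a" and r_sq: "r\<^sup>2 = D2 s u u"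
    using D2_nonneg[OF \<open>s \<in> U\<close>] by (simp_all add: \<sigma>_def r_def)
  have upper: "D1 x u - D1 s u \<le> \<sigma> * r"
  proof -
    have "(D2 s a u)\<^sup>2 \<le> (\<sigma> * r)\<^sup>2"
      using D2_Cauchy_Schwarz[OF \<open>s \<in> U\<close>, of a u] by (simp add: \<sigma>_sq r_sq power_mult_distrib)
    then show ?thesis
      using D1_x[of u] \<open>\<sigma> \<ge> 0\<close> \<open>r \<ge> 0\<close> abs_le_square_iff[of "D2 s a u" "\<sigma> * r"] by simp
  qed
  have lower: "r\<^sup>2 / (1 + M * r) \<le> D1 x u - D1 s u"
    using D1_increment_lower_bound[of s u] assms(1,2) unfolding r_sq by (simp add: u_def r_def)
  have "r \<le> 3/2 * \<sigma>"
    using newton_radius_bound[OF \<open>\<sigma> \<ge> 0\<close> \<open>r \<ge> 0\<close> M_pos _ lower upper] small by (simp add: \<sigma>_def)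
  have "f x - f s - D1 s u \<le> D1 x u - D1 s u"
    using first_order_convexity[OF \<open>x \<in> U\<close> \<open>s \<in> U\<close>] by (simp add: u_def blinfun.diff_right)
  also have "\<dots> \<le> \<sigma> * (3/2 * \<sigma>)"
    using upper \<open>r \<le> 3/2 * \<sigma>\<close> \<open>\<sigma> \<ge> 0\<close> mult_left_mono by fastforce
  finally show ?thesis
    by (simp add: u_def \<sigma>_sq[symmetric] power2_eq_square)
qed

end

lemma Gamma0_not_MInf: "Gamma0 \<psi> \<Longrightarrow> \<psi> x \<noteq> -\<infinity>"
  unfolding Gamma0_def proper_fun_def by blast

lemma Gamma0_real_on_edom:
  assumes "Gamma0 \<psi>" "x \<in> edom \<psi>"
  shows "\<psi> x = ereal (real_of_ereal (\<psi> x))"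
  using Gamma0_not_MInf[OF assms(1)] assms(2) by (cases "\<psi> x") (auto simp: edom_def)

lemma Gamma0_convex_combination:
  assumes "Gamma0 \<psi>" "\<psi> x = ereal a" "\<psi> z = ereal b" "0 \<le> t" "t \<le> 1"
  shows "\<psi> ((1 - t) *\<^sub>R x + t *\<^sub>R z) \<le> ereal ((1 - t) * a + t * b)"
proof -
  define S where "S = {(x, t::real). \<psi> x \<le> ereal t}"
  have "convex S"
    using assms(1) unfolding Gamma0_def convex_efun_def S_def by blast
  moreover have "(x, a) \<in> S" "(z, b) \<in> S"
    using assms(2,3) unfolding S_def by auto
  ultimately have "(1 - t) *\<^sub>R (x, a) + t *\<^sub>R (z, b) \<in> S"
    using convexD[of S "(x, a)" "(z, b)" "1 - t" t] assms(4,5) by simp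
  then show ?thesis
    unfolding S_def by simp
qed

lemma Gamma0_convex_edom:
  assumes "Gamma0 \<psi>"
  shows "convex (edom \<psi>)"
proof (rule convexI)
  fix x z :: 'a and u v :: real
  assume "x \<in> edom \<psi>" "z \<in> edom \<psi>" "0 \<le> u" "0 \<le> v" "u + v = 1"
  then have "\<psi> ((1 - v) *\<^sub>R x + v *\<^sub>R z) \<le> ereal ((1 - v) * real_of_ereal (\<psi> x) + v * real_of_ereal (\<psi> z))"
    using Gamma0_convex_combination[OF assms Gamma0_real_on_edom[OF assms] Gamma0_real_on_edom[OF assms]]
    by simp
  moreover have "u = 1 - v"
    using \<open>u + v = 1\<close> by simp
  ultimately have "\<psi> (u *\<^sub>R x + v *\<^sub>R z) \<le> ereal (u * real_of_ereal (\<psi> x) + v * real_of_ereal (\<psi> z))"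
    by simp
  then show "u *\<^sub>R x + v *\<^sub>R z \<in> edom \<psi>"
    unfolding edom_def using le_less_trans by fastforce
qed

lemma fconj_lower_bound: "ereal (inner y x) - \<psi> x \<le> fconj \<psi> y"
  unfolding fconj_def by (rule SUP_upper) simp

lemma Gamma0_fconj_not_MInf:
  assumes "Gamma0 \<psi>"
  shows "fconj \<psi> y \<noteq> -\<infinity>"
proof -
  obtain x where "\<psi> x \<noteq> \<infinity>"
    using assms unfolding Gamma0_def proper_fun_def by blast
  then obtain v where "\<psi> x = ereal v"
    using Gamma0_not_MInf[OF assms, of x] by (cases "\<psi> x") auto
  then show ?thesis
    using fconj_lower_bound[of y x \<psi>] by auto
qed

lemma linear_eq_inner_sum_Basis:
  fixes L :: "'a::euclidean_space \<Rightarrow> real"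
  assumes "linear L"
  shows "L h = inner h (\<Sum>b\<in>Basis. L b *\<^sub>R b)"
proof -
  have "L h = L (\<Sum>b\<in>Basis. inner h b *\<^sub>R b)"
    by (simp add: euclidean_representation)
  also have "\<dots> = inner h (\<Sum>b\<in>Basis. L b *\<^sub>R b)"
    by (simp add: linear_sum[OF assms] linear.scaleR[OF assms] inner_sum_right mult.commute)
  finally show ?thesis .
qed

lemma has_derivative_imp_egrad:
  fixes \<psi> :: "'a::euclidean_space \<Rightarrow> ereal"
  assumes "((\<lambda>y. real_of_ereal (\<psi> y)) has_derivative L) (at x)"
  shows "L h = inner h (egrad \<psi> x)"
proof -
  have "GDERIV (\<lambda>y. real_of_ereal (\<psi> y)) x :> (\<Sum>b\<in>Basis. L b *\<^sub>R b)"
  proof -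
    have "linear L"
      using assms has_derivative_linear by blast
    then have "L h = inner h (\<Sum>b\<in>Basis. L b *\<^sub>R b)" for h
      by (rule linear_eq_inner_sum_Basis)
    then show ?thesis
      unfolding gderiv_def by (rule has_derivative_eq_rhs[OF assms, OF ext])
  qed
  then have "GDERIV (\<lambda>y. real_of_ereal (\<psi> y)) x :> egrad \<psi> x"
    unfolding egrad_def by (rule someI)
  then show ?thesis
    unfolding gderiv_def using assms has_derivative_unique by metis
qed

lemma egrad_eq_sum_Basis:
  fixes \<psi> :: "'a::euclidean_space \<Rightarrow> ereal"
  assumes "((\<lambda>y. real_of_ereal (\<psi> y)) has_derivative L) (at x)"
  shows "egrad \<psi> x = (\<Sum>b\<in>Basis. L b *\<^sub>R b)"
  using euclidean_representation[of "egrad \<psi> x"] has_derivative_imp_egrad[OF assms]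
  by (simp add: inner_commute)

lemma ehess_eq_sum_Basis:
  fixes \<psi> :: "'a::euclidean_space \<Rightarrow> ereal"
  assumes "open U" "x \<in> U"
    and "\<And>z. z \<in> U \<Longrightarrow> ((\<lambda>y. real_of_ereal (\<psi> y)) has_derivative blinfun_apply (D z)) (at z)"
    and "(D has_derivative blinfun_apply B) (at x)"
  shows "ehess \<psi> x = (\<lambda>v. \<Sum>b\<in>Basis. B v b *\<^sub>R b)"
proof -
  have "((\<lambda>z. \<Sum>b\<in>Basis. D z b *\<^sub>R b) has_derivative (\<lambda>v. \<Sum>b\<in>Basis. B v b *\<^sub>R b)) (at x)"
    using bounded_linear.has_derivative[OF bounded_linear_apply_blinfun assms(4)]
    by (intro has_derivative_sum bounded_linear.has_derivative[OF bounded_linear_scaleR_left]) auto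
  then have deriv: "(egrad \<psi> has_derivative (\<lambda>v. \<Sum>b\<in>Basis. B v b *\<^sub>R b)) (at x)"
    using assms(1,2) by (rule has_derivative_transform_within_open) (simp add: egrad_eq_sum_Basis[OF assms(3)])
  then have "(egrad \<psi> has_derivative ehess \<psi> x) (at x)"
    unfolding ehess_def by (rule someI[where P = "\<lambda>H. (egrad \<psi> has_derivative H) (at x)"])
  then show ?thesis
    using deriv has_derivative_unique by blast
qed

lemma inner_ehess_eq:
  fixes \<psi> :: "'a::euclidean_space \<Rightarrow> ereal"
  assumes "open U" "x \<in> U"
    and "\<And>z. z \<in> U \<Longrightarrow> ((\<lambda>y. real_of_ereal (\<psi> y)) has_derivative blinfun_apply (D z)) (at z)"
    and "(D has_derivative blinfun_apply B) (at x)"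
  shows "inner u (ehess \<psi> x v) = B v u"
  using ehess_eq_sum_Basis[OF assms]
    linear_eq_inner_sum_Basis[OF bounded_linear.linear[OF blinfun.bounded_linear_right], of "B v" u]
  by simp

locale self_concordant_Gamma0 = nondegenerate_self_concordant +
  fixes \<psi> :: "'a::euclidean_space \<Rightarrow> ereal"
  assumes Gamma0: "Gamma0 \<psi>" and U_eq: "U = interior (edom \<psi>)"
    and f_eq: "\<And>x. f x = real_of_ereal (\<psi> x)"
    and closed_sublevel: "\<And>\<alpha>. closed {x\<in>U. f x \<le> \<alpha>}"
begin

lemma psi_eq: "x \<in> U \<Longrightarrow> \<psi> x = ereal (f x)"
  using Gamma0_real_on_edom[OF Gamma0, of x] interior_subset[of "edom \<psi>"] by (auto simp: U_eq f_eq)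

lemma has_derivative_psi: "x \<in> U \<Longrightarrow> ((\<lambda>y. real_of_ereal (\<psi> y)) has_derivative D1 x) (at x)"
  using has_derivative_f by (simp add: f_eq[abs_def])

lemma D1_eq_inner_egrad: "x \<in> U \<Longrightarrow> D1 x h = inner h (egrad \<psi> x)"
  using has_derivative_imp_egrad[OF has_derivative_psi] .

lemma inner_ehess: "x \<in> U \<Longrightarrow> inner u (ehess \<psi> x v) = D2 x v u"
  using inner_ehess_eq[OF open_U _ has_derivative_psi has_derivative_D1] .

lemma ehess_inv_apply:
  assumes "x \<in> U"
  shows "ehess \<psi> x (inv (ehess \<psi> x) e) = e"
proof -
  have "linear (ehess \<psi> x)"
    by (simp add: ehess_eq_sum_Basis[OF open_U assms has_derivative_psi has_derivative_D1[OF assms]]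
        blinfun.bilinear_simps scaleR_add_left sum.distrib scaleR_sum_right linearI)
  moreover have "inj (ehess \<psi> x)"
    unfolding linear_injective_0[OF \<open>linear (ehess \<psi> x)\<close>]
    using inner_ehess[OF assms] D2_pos[OF assms] by (metis inner_zero_right order_less_irrefl)
  ultimately have "surj (ehess \<psi> x)"
    using linear_injective_imp_surjective by blast
  then show ?thesis
    by (rule surj_f_inv_f)
qed

lemma bregman_eq:
  assumes "x \<in> U" "s \<in> U"
  shows "bregman \<psi> x s = ereal (f x - f s - D1 s (x - s))"
  using assms by (simp add: bregman_def psi_eq D1_eq_inner_egrad inner_commute)

lemma continuous_on_f: "continuous_on U f"
  using has_derivative_f by (meson has_derivative_continuous continuous_at_imp_continuous_on)

text \<open>Finiteness of \<open>fconj \<psi>\<close> at the points \<open>y \<plusminus> d b\<close>, \<open>b \<in> Basis\<close>, bounds every coordinate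
  on the sublevel set.\<close>
lemma tilted_sublevel_bounded:
  assumes "y \<in> interior (edom (fconj \<psi>))"
  shows "bounded {x\<in>U. f x - inner y x \<le> \<alpha>}"
proof -
  obtain d where "d > 0" and d: "cball y d \<subseteq> edom (fconj \<psi>)"
    using assms mem_interior_cball by blast
  define P where "P w = real_of_ereal (fconj \<psi> (y + d *\<^sub>R w))" for w
  have P: "inner (y + d *\<^sub>R w) x - f x \<le> P w" if "x \<in> U" "norm w \<le> 1" for x w
  proof -
    have "y + d *\<^sub>R w \<in> edom (fconj \<psi>)"
      using d \<open>d > 0\<close> that(2) mult_left_le[of "norm w" d] by (auto simp: dist_norm)
    then have "fconj \<psi> (y + d *\<^sub>R w) = ereal (P w)"
      using Gamma0_fconj_not_MInf[OF Gamma0] unfolding P_def edom_def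
      by (cases "fconj \<psi> (y + d *\<^sub>R w)") auto
    then show ?thesis
      using fconj_lower_bound[of "y + d *\<^sub>R w" x \<psi>] psi_eq[OF that(1)] by simp
  qed
  define R where "R b = (\<bar>P b\<bar> + \<bar>P (- b)\<bar> + \<bar>\<alpha>\<bar>) / d" for b
  have "norm x \<le> (\<Sum>b\<in>Basis. R b)" if "x \<in> U" "f x - inner y x \<le> \<alpha>" for x
  proof -
    have "\<bar>inner x b\<bar> \<le> R b" if "b \<in> Basis" for b
    proof -
      have shift: "inner (y + d *\<^sub>R c) x = inner y x + d * inner x c" for c
        by (simp add: inner_add_left inner_commute[of c])
      have "inner y x + d * inner x b - f x \<le> P b" "inner y x - d * inner x b - f x \<le> P (- b)"
        using P[OF \<open>x \<in> U\<close>, of b] P[OF \<open>x \<in> U\<close>, of "- b"] shift[of b] shift[of "- b"]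
          \<open>b \<in> Basis\<close> by auto
      then have "d * \<bar>inner x b\<bar> \<le> \<bar>P b\<bar> + \<bar>P (- b)\<bar> + \<bar>\<alpha>\<bar>"
        using \<open>d > 0\<close> \<open>f x - inner y x \<le> \<alpha>\<close> by (simp add: abs_mult abs_le_iff)
      then show ?thesis
        using \<open>d > 0\<close> by (simp add: R_def pos_le_divide_eq mult.commute)
    qed
    then show ?thesis
      using norm_le_l1[of x] sum_mono[of Basis "\<lambda>b. \<bar>inner x b\<bar>" R] by simp
  qed
  then show ?thesis
    unfolding bounded_iff by blast
qed

lemma tilted_minimizer_exists:
  assumes "y \<in> interior (edom (fconj \<psi>))" "s \<in> U"
  shows "\<exists>z\<in>U. \<forall>x\<in>U. f z - inner y z \<le> f x - inner y x"
proof -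
  define \<alpha> where "\<alpha> = f s - inner y s"
  define L where "L = {x\<in>U. f x - inner y x \<le> \<alpha>}"
  obtain R where R: "\<And>x. x \<in> L \<Longrightarrow> norm x \<le> R"
    using tilted_sublevel_bounded[OF assms(1)] unfolding L_def bounded_iff by blast
  have "inner y x \<le> norm y * R" if "x \<in> L" for x
    using Cauchy_Schwarz_ineq2[of y x] R[OF that] mult_left_mono[of "norm x" R "norm y"] by simp
  then have L_eq: "L = {x\<in>{x\<in>U. f x \<le> \<alpha> + norm y * R}. f x - inner y x \<le> \<alpha>}"
    unfolding L_def by fastforce
  have "continuous_on {x\<in>U. f x \<le> \<alpha> + norm y * R} (\<lambda>x. f x - inner y x)"
    by (intro continuous_intros continuous_on_subset[OF continuous_on_f]) auto
  then have "closed L"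
    unfolding L_eq by (rule continuous_on_closed_Collect_le[OF _ continuous_on_const closed_sublevel])
  moreover have "bounded L"
    unfolding L_def using tilted_sublevel_bounded[OF assms(1)] .
  moreover have "continuous_on L (\<lambda>x. f x - inner y x)"
    unfolding L_def by (intro continuous_intros continuous_on_subset[OF continuous_on_f]) auto
  moreover have "s \<in> L"
    using assms(2) by (simp add: L_def \<alpha>_def)
  ultimately obtain z where "z \<in> L" and z: "\<And>x. x \<in> L \<Longrightarrow> f z - inner y z \<le> f x - inner y x"
    using continuous_attains_inf[of L] compact_eq_bounded_closed by blast
  then have "f z - inner y z \<le> f x - inner y x" if "x \<in> U" for x
    using that by (cases "x \<in> L") (auto simp: L_def)
  then show ?thesis
    using \<open>z \<in> L\<close> unfolding L_def by blast
qed

lemma tilted_gap_convex: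
  assumes "\<psi> x = ereal v" "z \<in> U" "0 \<le> t" "t \<le> 1" "z + t *\<^sub>R (x - z) \<in> U"
  shows "f (z + t *\<^sub>R (x - z)) - inner y (z + t *\<^sub>R (x - z)) - (f z - inner y z)
           \<le> t * (v - inner y x - (f z - inner y z))"
proof -
  have "z + t *\<^sub>R (x - z) = (1 - t) *\<^sub>R z + t *\<^sub>R x"
    by (simp add: algebra_simps)
  then have "\<psi> (z + t *\<^sub>R (x - z)) \<le> ereal ((1 - t) * f z + t * v)"
    using Gamma0_convex_combination[OF Gamma0 psi_eq[OF assms(2)] assms(1,3,4)] by simp
  then have "f (z + t *\<^sub>R (x - z)) \<le> (1 - t) * f z + t * v"
    using psi_eq[OF assms(5)] by simp
  moreover have "inner y (z + t *\<^sub>R (x - z)) = (1 - t) * inner y z + t * inner y x"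
    by (simp add: inner_add_right inner_diff_right algebra_simps)
  ultimately show ?thesis
    by (simp add: algebra_simps)
qed

context
  fixes y z
  assumes z_in_U: "z \<in> U" and z_min: "\<And>x. x \<in> U \<Longrightarrow> f z - inner y z \<le> f x - inner y x"
begin

lemma D1_minimizer: "D1 z h = inner y h"
proof -
  have deriv: "((\<lambda>x. f x - inner y x) has_derivative (\<lambda>h. D1 z h - inner y h)) (at z)"
    by (intro has_derivative_diff has_derivative_f[OF z_in_U] bounded_linear_imp_has_derivative
        bounded_linear_inner_right)
  have "\<forall>\<^sub>F x in at z. f z - inner y z \<le> f x - inner y x"
    unfolding eventually_at_topological using open_U z_in_U z_min by blast
  from has_derivative_local_min[OF deriv this] show ?thesis
    by (metis right_minus_eq)
qed

lemma minimizer_global: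
  assumes "\<psi> x = ereal v"
  shows "f z - inner y z \<le> v - inner y x"
proof (cases "x = z")
  case False
  obtain \<rho> where "\<rho> > 0" and \<rho>: "cball z \<rho> \<subseteq> U"
    using open_U z_in_U open_contains_cball by blast
  define t where "t = min 1 (\<rho> / norm (x - z))"
  have "0 < t" "t \<le> 1"
    using \<open>\<rho> > 0\<close> False by (simp_all add: t_def)
  have "norm (t *\<^sub>R (x - z)) \<le> \<rho>"
    using \<open>0 < t\<close> False by (simp add: t_def min_mult_distrib_right)
  then have "z + t *\<^sub>R (x - z) \<in> U"
    using \<rho> by (metis add_diff_cancel_left' dist_norm mem_cball norm_minus_commute subsetD)
  then have "0 \<le> t * (v - inner y x - (f z - inner y z))"
    using tilted_gap_convex[where y = y, OF assms z_in_U less_imp_le[OF \<open>0 < t\<close>] \<open>t \<le> 1\<close>]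
      z_min[of "z + t *\<^sub>R (x - z)"] by fastforce
  then show ?thesis
    using \<open>0 < t\<close> by (simp add: zero_le_mult_iff)
qed (use psi_eq[OF z_in_U] assms in simp)

lemma fconj_at_minimizer: "fconj \<psi> y = ereal (inner y z - f z)"
proof (rule antisym)
  show "fconj \<psi> y \<le> ereal (inner y z - f z)"
    unfolding fconj_def
  proof (rule SUP_least)
    fix x
    show "ereal (inner y x) - \<psi> x \<le> ereal (inner y z - f z)"
    proof (cases "\<psi> x")
      case (real v)
      then show ?thesis
        using minimizer_global[OF real] by simp
    qed (use Gamma0_not_MInf[OF Gamma0, of x] in auto)
  qed
  show "ereal (inner y z - f z) \<le> fconj \<psi> y"
    using fconj_lower_bound[of y z \<psi>] psi_eq[OF z_in_U] by simp
qed

lemma minimizer_local_growth: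
  assumes "0 \<le> \<rho>" "cball z \<rho> \<subseteq> U"
  shows "\<exists>c>0. \<forall>x. norm (x - z) \<le> \<rho> \<longrightarrow>
           c * (norm (x - z))\<^sup>2 \<le> f x - inner y x - (f z - inner y z)"
proof -
  obtain m where "m > 0" and m: "\<And>u. m * (norm u)\<^sup>2 \<le> D2 z u u"
    using D2_lower_bound[OF z_in_U] by blast
  define K where "K = 2 * (1 + M * sqrt (norm (D2 z)) * \<rho>)"
  have "K > 0"
    using M_pos assms(1) by (simp add: K_def add_pos_nonneg)
  have "m / K * (norm (x - z))\<^sup>2 \<le> f x - inner y x - (f z - inner y z)"
    if "norm (x - z) \<le> \<rho>" for x
  proof -
    define u where "u = x - z"
    have "z + u \<in> U"
      using that assms(2) by (auto simp: u_def dist_norm norm_minus_commute)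
    have "sqrt (D2 z u u) \<le> sqrt (norm (D2 z)) * \<rho>"
    proof -
      have "sqrt (D2 z u u) \<le> sqrt (norm (D2 z)) * norm u"
        using real_sqrt_le_mono[OF D2_upper_bound[of z u]] by (simp add: real_sqrt_mult)
      also have "\<dots> \<le> sqrt (norm (D2 z)) * \<rho>"
        using that by (simp add: u_def mult_left_mono)
      finally show ?thesis .
    qed
    then have "2 * (1 + M * sqrt (D2 z u u)) \<le> K"
      using M_pos by (simp add: K_def mult_left_mono mult.assoc)
    then have "m * (norm u)\<^sup>2 / K \<le> D2 z u u / (2 * (1 + M * sqrt (D2 z u u)))"
      using m[of u] D2_nonneg[OF z_in_U, of u] M_pos by (intro frac_le) (auto simp: add_pos_nonneg)
    also have "\<dots> \<le> f (z + u) - f z - D1 z u"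
      using taylor_lower_bound[OF z_in_U \<open>z + u \<in> U\<close>] .
    finally show ?thesis
      by (simp add: u_def D1_minimizer inner_diff_right)
  qed
  then show ?thesis
    using \<open>m > 0\<close> \<open>K > 0\<close> by (intro exI[of _ "m / K"]) auto
qed

lemma minimizer_growth:
  "\<exists>c>0. \<exists>\<rho>>0. \<forall>x v. \<psi> x = ereal v \<longrightarrow>
     c * min ((norm (x - z))\<^sup>2) (\<rho> * norm (x - z)) \<le> v - inner y x - (f z - inner y z)"
proof -
  obtain \<rho> where "\<rho> > 0" and \<rho>: "cball z \<rho> \<subseteq> U"
    using open_U z_in_U open_contains_cball by blast
  obtain c where "c > 0" and c: "\<And>x. norm (x - z) \<le> \<rho> \<Longrightarrow>
      c * (norm (x - z))\<^sup>2 \<le> f x - inner y x - (f z - inner y z)"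
    using minimizer_local_growth[OF less_imp_le[OF \<open>\<rho> > 0\<close>] \<rho>] by blast
  have "c * min ((norm (x - z))\<^sup>2) (\<rho> * norm (x - z)) \<le> v - inner y x - (f z - inner y z)"
    if "\<psi> x = ereal v" for x v
  proof (cases "norm (x - z) \<le> \<rho>")
    case True
    then have "x \<in> U"
      using \<rho> by (auto simp: dist_norm norm_minus_commute)
    then show ?thesis
      using c[OF True] psi_eq[of x] that \<open>c > 0\<close>
      by (smt (verit) ereal.inject min.cobounded1 mult_left_mono)
  next
    case False
    define r where "r = norm (x - z)"
    define w where "w = z + (\<rho> / r) *\<^sub>R (x - z)"
    have "r > \<rho>"
      using False by (simp add: r_def)
    then have "x \<noteq> z"
      using \<open>\<rho> > 0\<close> by (auto simp: r_def)
    then have "norm (w - z) = \<rho>"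
      using \<open>\<rho> > 0\<close> by (simp add: w_def r_def)
    then have "w \<in> U"
      using \<rho> by (auto simp: dist_norm norm_minus_commute)
    text \<open>On the sphere of radius \<open>\<rho>\<close> the gap is at least \<open>c \<rho>\<^sup>2\<close>; convexity scales this up
      linearly in \<open>r\<close>.\<close>
    have "c * \<rho>\<^sup>2 \<le> \<rho> / r * (v - inner y x - (f z - inner y z))"
      using c[of w] \<open>norm (w - z) = \<rho>\<close> \<open>w \<in> U\<close> \<open>r > \<rho>\<close> \<open>\<rho> > 0\<close>
        tilted_gap_convex[OF that z_in_U, of "\<rho> / r" y] by (simp add: w_def)
    then have "\<rho> * (c * (\<rho> * r)) \<le> \<rho> * (v - inner y x - (f z - inner y z))"
      using \<open>r > \<rho>\<close> \<open>\<rho> > 0\<close> by (simp add: power2_eq_square field_simps)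
    then have "c * (\<rho> * r) \<le> v - inner y x - (f z - inner y z)"
      using \<open>\<rho> > 0\<close> by (simp only: mult_le_cancel_left_pos)
    then show ?thesis
      using \<open>c > 0\<close> by (smt (verit) min.cobounded2 mult_left_mono r_def)
  qed
  then show ?thesis
    using \<open>c > 0\<close> \<open>\<rho> > 0\<close> by blast
qed

text \<open>\<open>fconj \<psi> y' - fconj \<psi> y - inner (y' - y) z\<close> is the supremum over \<open>x\<close> of
  \<open>inner (y' - y) (x - z)\<close> minus the tilted gap at \<open>x\<close>, which the growth bound caps by
  \<open>norm (y' - y)\<^sup>2 / (4 c)\<close>.\<close>
lemma fconj_quadratic_remainder:
  "\<exists>d>0. \<exists>K. \<forall>y'. norm (y' - y) < d \<longrightarrow>
     \<bar>real_of_ereal (fconj \<psi> y') - real_of_ereal (fconj \<psi> y) - inner (y' - y) z\<bar> \<le> K * (norm (y' - y))\<^sup>2"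
proof -
  obtain c \<rho> where "c > 0" "\<rho> > 0" and growth: "\<And>x v. \<psi> x = ereal v \<Longrightarrow>
      c * min ((norm (x - z))\<^sup>2) (\<rho> * norm (x - z)) \<le> v - inner y x - (f z - inner y z)"
    using minimizer_growth by blast
  have "\<bar>real_of_ereal (fconj \<psi> y') - real_of_ereal (fconj \<psi> y) - inner (y' - y) z\<bar>
      \<le> 1 / (4 * c) * (norm (y' - y))\<^sup>2" if "norm (y' - y) < c * \<rho>" for y'
  proof -
    define \<epsilon> where "\<epsilon> = norm (y' - y)"
    have upper: "fconj \<psi> y' \<le> ereal (inner y' z - f z + \<epsilon>\<^sup>2 / (4 * c))"
      unfolding fconj_def
    proof (rule SUP_least)
      fix x
      show "ereal (inner y' x) - \<psi> x \<le> ereal (inner y' z - f z + \<epsilon>\<^sup>2 / (4 * c))"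
      proof (cases "\<psi> x")
        case (real v)
        have "inner (y' - y) (x - z) \<le> \<epsilon> * norm (x - z)"
          unfolding \<epsilon>_def by (rule norm_cauchy_schwarz)
        moreover have "\<epsilon> * norm (x - z) - c * min ((norm (x - z))\<^sup>2) (\<rho> * norm (x - z)) \<le> \<epsilon>\<^sup>2 / (4 * c)"
          using \<open>c > 0\<close> that by (intro linear_minus_min_quadratic_le) (auto simp: \<epsilon>_def)
        moreover have "inner y' x = inner y x + inner (y' - y) z + inner (y' - y) (x - z)"
          "inner y' z = inner y z + inner (y' - y) z"
          by (simp_all add: inner_diff_left inner_diff_right)
        ultimately show ?thesis
          using growth[OF real] real by simp
      qed (use Gamma0_not_MInf[OF Gamma0, of x] in auto)
    qed
    have lower: "ereal (inner y' z - f z) \<le> fconj \<psi> y'"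
      using fconj_lower_bound[of y' z \<psi>] psi_eq[OF z_in_U] by simp
    then have "real_of_ereal (fconj \<psi> y') \<in> {inner y' z - f z .. inner y' z - f z + \<epsilon>\<^sup>2 / (4 * c)}"
      using upper by (cases "fconj \<psi> y'") auto
    then show ?thesis
      by (simp add: fconj_at_minimizer \<epsilon>_def inner_diff_left)
  qed
  then show ?thesis
    using \<open>c > 0\<close> \<open>\<rho> > 0\<close> by (intro exI[of _ "c * \<rho>"] conjI exI[of _ "1 / (4 * c)"]) auto
qed

lemma has_derivative_fconj: "((\<lambda>y'. real_of_ereal (fconj \<psi> y')) has_derivative (\<lambda>h. inner h z)) (at y)"
  using fconj_quadratic_remainder bounded_linear_inner_left
  by (blast intro: has_derivative_of_quadratic_remainder)

lemma egrad_fconj: "egrad (fconj \<psi>) y = z"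
  using has_derivative_imp_egrad[OF has_derivative_fconj] vector_eq_ldot by metis

end

lemma inner_inv_ehess:
  assumes "x \<in> U"
  shows "inner e (inv (ehess \<psi> x) e) = D2 x (inv (ehess \<psi> x) e) (inv (ehess \<psi> x) e)"
proof -
  have "inner e (inv (ehess \<psi> x) e) = inner (inv (ehess \<psi> x) e) (ehess \<psi> x (inv (ehess \<psi> x) e))"
    by (simp add: ehess_inv_apply[OF assms] inner_commute)
  then show ?thesis
    by (simp add: inner_ehess[OF assms])
qed

lemma bregman_dual_step_bound:
  assumes "s \<in> U" and y: "egrad \<psi> s - e \<in> interior (edom (fconj \<psi>))"
    and small: "sqrt (inner e (inv (ehess \<psi> s) e)) < 1 / (3 * M)"
  shows "bregman \<psi> (egrad (fconj \<psi>) (egrad \<psi> s - e)) s \<le> ereal (3/2 * inner e (inv (ehess \<psi> s) e))"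
proof -
  define a where "a = inv (ehess \<psi> s) e"
  obtain z where "z \<in> U" and z_min: "\<And>x. x \<in> U \<Longrightarrow>
      f z - inner (egrad \<psi> s - e) z \<le> f x - inner (egrad \<psi> s - e) x"
    using tilted_minimizer_exists[OF y \<open>s \<in> U\<close>] by blast
  have "D1 z h - D1 s h = - D2 s a h" for h
    using D1_minimizer[OF \<open>z \<in> U\<close> z_min, of h] D1_eq_inner_egrad[OF \<open>s \<in> U\<close>, of h]
      inner_ehess[OF \<open>s \<in> U\<close>, of h a] ehess_inv_apply[OF \<open>s \<in> U\<close>, of e]
    by (simp add: a_def inner_diff_right inner_commute)
  moreover have "M * sqrt (D2 s a a) < 1/3"
    using small M_pos inner_inv_ehess[OF \<open>s \<in> U\<close>] by (simp add: a_def pos_less_divide_eq mult.commute)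
  ultimately have "f z - f s - D1 s (z - s) \<le> 3/2 * D2 s a a"
    using newton_step_bound[OF \<open>s \<in> U\<close> \<open>z \<in> U\<close>] by blast
  then show ?thesis
    using egrad_fconj[OF \<open>z \<in> U\<close> z_min] bregman_eq[OF \<open>z \<in> U\<close> \<open>s \<in> U\<close>] inner_inv_ehess[OF \<open>s \<in> U\<close>]
    by (simp add: a_def)
qed

end

lemma self_concordant_Gamma0_if_strongly_self_concordant:
  fixes \<psi> :: "'a::euclidean_space \<Rightarrow> ereal"
  assumes "Gamma0 \<psi>"
    and "strongly_self_concordant_on (interior (edom \<psi>)) (\<lambda>x. real_of_ereal (\<psi> x)) M"
    and "\<forall>x\<in>interior (edom \<psi>). \<forall>u. u \<noteq> 0 \<longrightarrow> inner u (ehess \<psi> x u) > 0"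
  shows "\<exists>D1 D2 D3. self_concordant_Gamma0 (interior (edom \<psi>)) (\<lambda>x. real_of_ereal (\<psi> x)) M D1 D2 D3 \<psi>"
proof -
  let ?U = "interior (edom \<psi>)"
  obtain D1 :: "'a \<Rightarrow> 'a \<Rightarrow>\<^sub>L real" and D2 :: "'a \<Rightarrow> 'a \<Rightarrow>\<^sub>L 'a \<Rightarrow>\<^sub>L real"
    and D3 :: "'a \<Rightarrow> 'a \<Rightarrow>\<^sub>L 'a \<Rightarrow>\<^sub>L 'a \<Rightarrow>\<^sub>L real" where
    D1: "\<forall>x\<in>?U. ((\<lambda>x. real_of_ereal (\<psi> x)) has_derivative D1 x) (at x)"
    and D2: "\<forall>x\<in>?U. (D1 has_derivative D2 x) (at x)"
    and D3: "\<forall>x\<in>?U. (D2 has_derivative D3 x) (at x)"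
    and sc: "\<forall>x\<in>?U. \<forall>u. \<bar>D3 x u u u\<bar> \<le> 2 * M * D2 x u u powr (3/2)"
    and "M > 0" and closed: "\<And>\<alpha>. closed {x\<in>?U. real_of_ereal (\<psi> x) \<le> \<alpha>}"
    using assms(2) unfolding strongly_self_concordant_on_def self_concordant_on_def by blast
  have "D2 x u u > 0" if "x \<in> ?U" "u \<noteq> 0" for x u
  proof -
    have "inner u (ehess \<psi> x u) = D2 x u u"
      using inner_ehess_eq[OF open_interior that(1)] D1 D2 that(1) by blast
    then show ?thesis
      using assms(3) that by force
  qed
  then show ?thesis
    using D1 D2 D3 sc \<open>M > 0\<close> closed convex_interior[OF Gamma0_convex_edom[OF assms(1)]] assms(1)
    by (intro exI) (unfold_locales, auto)
qed

theorem mainTheorem18: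
  fixes \<psi> :: "'a::euclidean_space \<Rightarrow> ereal"
    and M :: real and s e :: 'a
  assumes "Gamma0 \<psi>"
    and "legendre \<psi>"
    and "strongly_self_concordant_on (interior (edom \<psi>)) (\<lambda>x. real_of_ereal (\<psi> x)) M"
    and "M > 0"
    and "\<forall>x\<in>interior (edom \<psi>). \<forall>u. u \<noteq> 0 \<longrightarrow> inner u (ehess \<psi> x u) > 0"
    and "s \<in> interior (edom \<psi>)"
    and "egrad \<psi> s - e \<in> interior (edom (fconj \<psi>))"
    and "sqrt (inner e (inv (ehess \<psi> s) e)) < 1 / (3 * M)"
  shows "bregman \<psi> (egrad (fconj \<psi>) (egrad \<psi> s - e)) s \<le> ereal (2 * inner e (inv (ehess \<psi> s) e))"
proof -
  obtain D1 D2 D3 where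
    "self_concordant_Gamma0 (interior (edom \<psi>)) (\<lambda>x. real_of_ereal (\<psi> x)) M D1 D2 D3 \<psi>"
    using self_concordant_Gamma0_if_strongly_self_concordant assms(1,3,5) by blast
  then interpret self_concordant_Gamma0 "interior (edom \<psi>)" "\<lambda>x. real_of_ereal (\<psi> x)" M D1 D2 D3 \<psi> .
  have "bregman \<psi> (egrad (fconj \<psi>) (egrad \<psi> s - e)) s \<le> ereal (3/2 * inner e (inv (ehess \<psi> s) e))"
    using bregman_dual_step_bound assms(6-8) .
  also have "\<dots> \<le> ereal (2 * inner e (inv (ehess \<psi> s) e))"
    using inner_inv_ehess[OF assms(6)] D2_nonneg[OF assms(6)] by simp
  finally show ?thesis .
qed

end
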